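(* Let $1\le l\le r$ and consider a canonical noiseless MMV model $B=AX$ in which $A$ satisfies $0\le\delta^L_{2k-r+l}(A)<1$ and the nonzero rows of $X$ are in general position. Let $I\subset\{1,\dots,n\}$ satisfy $|I|\le\min(2(k-r)+l-1,\,k-1)$, $|I\setminus\operatorname{supp}X|\le k-r+l-1$ and $|I\cap\operatorname{supp}X|\ge k-r$. Then for every $j\notin I$, the following are equivalent: (a) $j\in\operatorname{supp}X$; (b) $\operatorname{rank}[A_I~B]=\operatorname{rank}[A_{I\cup\{j\}}~B]$; (c) $\mathbf a_j^{*}P^\perp_{R([A_I~B])}\mathbf a_j=0$.
   Context: Canonical MMV setting: $m,n,r,k$ are positive integers with $r\le m<n$ and $r\le k$. $A\in\mathbb{R}^{m\times n}$ is the sensing matrix with columns $\mathbf a_1,\dots,\mathbf a_n$; $X\in\mathbb{R}^{n\times r}$ has rows $\mathbf x^1,\dots,\mathbf x^n$, $\operatorname{supp}X=\{i:\mathbf x^i\neq 0\}$ and $|\operatorname{supp}X|=k$; $B=AX\in\mathbb{R}^{m\times r}$ has full column rank $r$. For an index set $I$, $A_I$ is the submatrix of $A$ formed by the columns indexed by $I$, and $[A_I~B]$ denotes horizontal concatenation. $R(M)$ is the column space of $M$, $P_{R(M)}$ the orthogonal projection onto it, and $P^\perp_{R(M)}=\mathrm{Id}-P_{R(M)}$; $^*$ denotes transpose. The lower restricted isometry constant $\delta^L_s(A)$ is the smallest $\delta\ge0$ such that $(1-\delta)\|\mathbf x\|_2^2\le\|A\mathbf x\|_2^2$ for all $\mathbf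 x$ with at most $s$ nonzero entries. "The nonzero rows of $X$ are in general position" means any $r$ of the $k$ nonzero rows of $X$ are linearly independent. *)

theory Defs
  imports "HOL-Analysis.Analysis"
begin

definition row_supp :: "real^'r^'n \<Rightarrow> 'n set" where
  "row_supp X = {i. X $ i \<noteq> 0}"

definition lower_ric :: "nat \<Rightarrow> real^'n^'m \<Rightarrow> real" where
  "lower_ric s A = Inf {d. d \<ge> 0 \<and> (\<forall>x::real^'n. card {i. x $ i \<noteq> 0} \<le> s \<longrightarrow>
        (1 - d) * (norm x)\<^sup>2 \<le> (norm (A *v x))\<^sup>2)}"

definition rows_general_position :: "real^'r^'n \<Rightarrow> bool" where
  "rows_general_position X \<longleftrightarrow>
     (\<forall>S. S \<subseteq> row_supp X \<and> card S = CARD('r) \<longrightarrow>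
        inj_on (\<lambda>i. X $ i) S \<and> independent ((\<lambda>i. X $ i) ` S))"

text \<open>Column space R([A_I B]) of the horizontal concatenation [A_I B].\<close>
definition colspace_cat :: "real^'n^'m \<Rightarrow> 'n set \<Rightarrow> real^'r^'m \<Rightarrow> (real^'m) set" where
  "colspace_cat A I B = span ((\<lambda>j. column j A) ` I \<union> columns B)"

definition rank_cat :: "real^'n^'m \<Rightarrow> 'n set \<Rightarrow> real^'r^'m \<Rightarrow> nat" where
  "rank_cat A I B = dim (colspace_cat A I B)"

definition proj_onto :: "('a::real_inner) set \<Rightarrow> 'a \<Rightarrow> 'a" where
  "proj_onto S x = (THE y. y \<in> S \<and> (\<forall>z\<in>S. inner (x - y) z = 0))"

definition proj_perp :: "('a::real_inner) set \<Rightarrow> 'a \<Rightarrow> 'a" where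
  "proj_perp S x = x - proj_onto S x"

end

theory Submission
  imports Defs
begin

text \<open>
  Write \<open>S = supp X\<close> and \<open>V = R([A_I B])\<close>.  By the definition of rank,
  (b) says exactly that \<open>a_j \<in> V\<close>, and a projection argument shows that (c) says the
  same thing, so (b) \<longleftrightarrow> (c) is pure linear algebra.  For (a) \<longleftrightarrow> (b):
  \<^item> if \<open>j \<notin> S\<close> and \<open>a_j \<in> V\<close>, then, since every vector of \<open>V\<close> is \<open>A x\<close> for some \<open>x\<close>
    supported on \<open>I \<union> S\<close>, some nonzero vector supported on \<open>I \<union> S \<union> {j}\<close> lies in the kernel of \<open>A\<close>; its
    support has size at most \<open>2k - r + l\<close>, contradicting \<open>\<delta>\<^sup>L(A) < 1\<close>;
  \<^item> if \<open>j \<in> S\<close>, the at most \<open>r\<close> rows of \<open>X\<close> indexed by \<open>S - I\<close> are independent by general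
    position, so some \<open>y\<close> is dual to row \<open>j\<close> among them; then \<open>X y\<close> equals \<open>e_j\<close> up to
    entries in \<open>I\<close>, hence \<open>a_j = B y - A_I(\<dots>) \<in> V\<close>.
\<close>

text \<open>The orthogonal projection onto \<open>span G\<close> of \<open>y + z\<close>, with \<open>y \<in> span G\<close> and \<open>z \<bottom> span G\<close>,
  is \<open>y\<close>: this pins down the \<open>THE\<close> in \<open>proj_onto\<close> (the witness is unique).\<close>
lemma proj_onto_span_decomp:
  fixes y z :: "'a::euclidean_space"
  assumes y: "y \<in> span G" and z: "\<And>w. w \<in> span G \<Longrightarrow> orthogonal z w"
  shows "proj_onto (span G) (y + z) = y"
  unfolding proj_onto_def
proof (rule the_equality)
  show "y \<in> span G \<and> (\<forall>w\<in>span G. inner (y + z - y) w = 0)"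
    using y z by (simp add: orthogonal_def)
next
  fix y' assume y': "y' \<in> span G \<and> (\<forall>w\<in>span G. inner (y + z - y') w = 0)"
  have d: "y - y' \<in> span G" using y y' span_diff by blast
  have "inner (y - y') (y - y') = inner (y + z - y') (y - y') - inner z (y - y')"
    by (simp add: inner_diff_left inner_add_left)
  also have "\<dots> = 0" using y' z[OF d] d by (simp add: orthogonal_def)
  finally show "y' = y" by simp
qed

lemma inner_proj_perp_eq_0_iff:
  fixes a :: "'a::euclidean_space"
  shows "inner a (proj_perp (span G) a) = 0 \<longleftrightarrow> a \<in> span G"
proof -
  obtain y z where y: "y \<in> span G" and z: "\<And>w. w \<in> span G \<Longrightarrow> orthogonal z w"
    and a: "a = y + z" using orthogonal_subspace_decomp_exists by blast
  have perp: "proj_perp (span G) a = z"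
    using proj_onto_span_decomp[OF y z] a by (simp add: proj_perp_def)
  have "inner y z = 0" using z[OF y] by (simp add: orthogonal_def inner_commute)
  then have "inner a z = inner z z" using a by (simp add: inner_add_left)
  then have "inner a (proj_perp (span G) a) = 0 \<longleftrightarrow> z = 0" using perp by simp
  also have "\<dots> \<longleftrightarrow> a \<in> span G"
    using a y z by (metis add.right_neutral add_diff_cancel_left' orthogonal_self span_diff)
  finally show ?thesis .
qed

lemma rank_cat_insert_eq_iff:
  "rank_cat A I B = rank_cat A (I \<union> {j}) B \<longleftrightarrow> column j A \<in> colspace_cat A I B"
proof -
  have "(\<lambda>j. column j A) ` (I \<union> {j}) \<union> columns B
      = insert (column j A) ((\<lambda>j. column j A) ` I \<union> columns B)" by auto
  then show ?thesis unfolding rank_cat_def colspace_cat_def by (simp add: dim_insert)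
qed

lemma matrix_vector_in_span_columns:
  fixes A :: "real^'n^'m"
  assumes "\<And>i. x $ i \<noteq> 0 \<Longrightarrow> i \<in> I"
  shows "A *v x \<in> span ((\<lambda>j. column j A) ` I)"
  unfolding matrix_mult_sum
proof (rule span_sum)
  fix i show "x $ i *s column i A \<in> span ((\<lambda>j. column j A) ` I)"
    using assms[of i]
    by (cases "x $ i = 0") (auto simp: span_zero span_base scalar_mult_eq_scaleR span_scale)
qed

lemma colspace_cat_product:
  fixes A :: "real^'n^'m" and X :: "real^'r^'n"
  assumes "v \<in> colspace_cat A I (A ** X)"
  obtains x where "v = A *v x" and "\<And>i. x $ i \<noteq> 0 \<Longrightarrow> i \<in> I \<union> row_supp X"
proof -
  define U where "U = {x :: real^'n. \<forall>i. x $ i \<noteq> 0 \<longrightarrow> i \<in> I \<union> row_supp X}"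
  have "subspace U" unfolding subspace_def U_def by (auto, metis add.left_neutral)
  have "(\<lambda>j. column j A) ` I \<union> columns (A ** X) \<subseteq> (\<lambda>x. A *v x) ` U"
  proof
    fix v assume "v \<in> (\<lambda>j. column j A) ` I \<union> columns (A ** X)"
    then consider i where "i \<in> I" "v = column i A" | i where "v = column i (A ** X)"
      unfolding columns_def by blast
    moreover have "column i A = A *v axis i 1" for i by (simp add: matrix_vector_mult_basis)
    moreover have "column i (A ** X) = A *v column i X" for i
      by (metis matrix_vector_mul_assoc matrix_vector_mult_basis)
    ultimately show "v \<in> (\<lambda>x. A *v x) ` U"
      by cases (auto simp: U_def axis_def column_def row_supp_def intro!: rev_image_eqI)
  qed
  then have "colspace_cat A I (A ** X) \<subseteq> (\<lambda>x. A *v x) ` U"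
    unfolding colspace_cat_def
    using span_minimal \<open>subspace U\<close> linear_subspace_image matrix_vector_mul_linear by blast
  then show ?thesis using assms that U_def by blast
qed

lemma lower_ric_lt_1_kernel:
  fixes A :: "real^'n^'m"
  assumes "lower_ric s A < 1" and "card {i. x $ i \<noteq> 0} \<le> s" and "A *v x = 0"
  shows "x = 0"
proof (rule ccontr)
  assume "x \<noteq> 0"
  let ?D = "{d. d \<ge> 0 \<and> (\<forall>x::real^'n. card {i. x $ i \<noteq> 0} \<le> s \<longrightarrow>
        (1 - d) * (norm x)\<^sup>2 \<le> (norm (A *v x))\<^sup>2)}"
  have "1 \<in> ?D" by simp
  then obtain d where d: "d \<in> ?D" "d < 1"
    using cInf_lessD[of ?D 1] assms(1) unfolding lower_ric_def by blast
  then have "(1 - d) * (norm x)\<^sup>2 \<le> 0" using assms(2,3) by auto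
  moreover have "(1 - d) * (norm x)\<^sup>2 > 0" using d(2) \<open>x \<noteq> 0\<close> by simp
  ultimately show False by simp
qed

lemma independent_dual_vector:
  fixes v :: "'a::euclidean_space"
  assumes "independent V" and "v \<in> V"
  obtains y where "inner v y = 1" and "\<And>w. w \<in> V - {v} \<Longrightarrow> inner w y = 0"
proof -
  obtain p z where p: "p \<in> span (V - {v})"
    and z: "\<And>w. w \<in> span (V - {v}) \<Longrightarrow> orthogonal z w" and v: "v = p + z"
    using orthogonal_subspace_decomp_exists by blast
  have "v \<notin> span (V - {v})" using assms by (auto simp: dependent_def)
  then have "z \<noteq> 0" using p v by auto
  have "inner p z = 0" using z[OF p] by (simp add: orthogonal_def inner_commute)
  then have "inner v z = inner z z" using v by (simp add: inner_add_left)
  with \<open>z \<noteq> 0\<close> have "inner v ((1 / inner z z) *\<^sub>R z) = 1" by simp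
  moreover have "inner w ((1 / inner z z) *\<^sub>R z) = 0" if "w \<in> V - {v}" for w
    using z[OF span_base[OF that]] by (simp add: orthogonal_def inner_commute)
  ultimately show ?thesis using that by blast
qed

text \<open>(b) \<Longrightarrow> (a): a column outside \<open>I \<union> supp X\<close> lying in \<open>R([A_I AX])\<close> would produce a
  sparse kernel vector of \<open>A\<close>.\<close>
lemma column_in_colspace_imp_supp:
  fixes A :: "real^'n^'m" and X :: "real^'r^'n"
  assumes j: "j \<notin> I"
    and inspan: "column j A \<in> colspace_cat A I (A ** X)"
    and ric: "lower_ric s A < 1"
    and card: "card (I \<union> row_supp X) + 1 \<le> s"
  shows "j \<in> row_supp X"
proof (rule ccontr)
  assume "j \<notin> row_supp X"
  obtain x where x: "column j A = A *v x" and xsupp: "\<And>i. x $ i \<noteq> 0 \<Longrightarrow> i \<in> I \<union> row_supp X"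
    using colspace_cat_product[OF inspan] by blast
  define y where "y = axis j 1 - x"
  have "x $ j = 0" using xsupp j \<open>j \<notin> row_supp X\<close> by blast
  then have "y $ j = 1" by (simp add: y_def)
  have "{i. y $ i \<noteq> 0} \<subseteq> insert j (I \<union> row_supp X)"
    using xsupp by (auto simp: y_def axis_def)
  then have "card {i. y $ i \<noteq> 0} \<le> card (insert j (I \<union> row_supp X))"
    by (rule card_mono[rotated]) simp
  also have "\<dots> \<le> s" using card by (simp add: card_insert_if)
  finally have sparse: "card {i. y $ i \<noteq> 0} \<le> s" .
  have "A *v y = 0"
    by (simp add: y_def matrix_vector_mult_diff_distrib matrix_vector_mult_basis x)
  with sparse have "y = 0" using lower_ric_lt_1_kernel[OF ric] by blast
  with \<open>y $ j = 1\<close> show False by simp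
qed

lemma supp_imp_column_in_colspace:
  fixes A :: "real^'n^'m" and X :: "real^'r^'n"
  assumes j: "j \<notin> I" "j \<in> row_supp X"
    and gp: "rows_general_position X"
    and c1: "card (row_supp X - I) \<le> CARD('r)" and c2: "CARD('r) \<le> card (row_supp X)"
  shows "column j A \<in> colspace_cat A I (A ** X)"
proof -
  let ?T = "row_supp X - I"
  obtain T' where T': "?T \<subseteq> T'" "T' \<subseteq> row_supp X" "card T' = CARD('r)"
    using exists_subset_between[OF c1 c2] by auto
  then have "inj_on (($) X) T'" "independent (($) X ` T')"
    using gp unfolding rows_general_position_def by auto
  then have inj: "inj_on (($) X) ?T" and ind: "independent (($) X ` ?T)"
    using T'(1) by (auto intro: inj_on_subset dest: independent_mono[of _ "($) X ` ?T"])
  obtain y where yj: "inner (X $ j) y = 1"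
    and yT: "\<And>w. w \<in> ($) X ` ?T - {X $ j} \<Longrightarrow> inner w y = 0"
    using independent_dual_vector[OF ind] j by blast
  have Xy: "(X *v y) $ i = inner (X $ i) y" for i
    by (simp add: matrix_vector_mult_def inner_vec_def)
  define x' where "x' = X *v y - axis j 1"
  have x'I: "i \<in> I" if "x' $ i \<noteq> 0" for i
  proof (rule ccontr)
    assume "i \<notin> I"
    have "i \<noteq> j" using that yj Xy by (auto simp: x'_def)
    show False
    proof (cases "i \<in> row_supp X")
      case True
      then have "X $ i \<in> ($) X ` ?T - {X $ j}"
        using \<open>i \<notin> I\<close> \<open>i \<noteq> j\<close> j inj by (auto simp: inj_on_def)
      then show False using that yT Xy \<open>i \<noteq> j\<close> by (simp add: x'_def axis_def)
    next
      case False
      then show False using that Xy \<open>i \<noteq> j\<close> by (simp add: x'_def row_supp_def axis_def)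
    qed
  qed
  have eq: "column j A = (A ** X) *v y - A *v x'"
    by (simp add: x'_def matrix_vector_mul_assoc[symmetric]
        matrix_vector_mult_diff_distrib matrix_vector_mult_basis)
  have "(A ** X) *v y \<in> span (columns (A ** X))"
    using matrix_vector_in_span_columns[of y UNIV "A ** X"] by (simp add: columns_def image_def)
  moreover have "A *v x' \<in> span ((\<lambda>j. column j A) ` I)"
    using matrix_vector_in_span_columns x'I by blast
  ultimately show ?thesis
    unfolding eq colspace_cat_def
    by (intro span_diff) (auto intro: subsetD[OF span_mono, rotated])
qed

theorem theorem2:
  fixes A :: "real^'n^'m" and X :: "real^'r^'n" and B :: "real^'r^'m"
    and k l :: nat and I :: "'n set" and j :: 'n
  assumes dims: "CARD('r) \<le> CARD('m)" "CARD('m) < CARD('n)" "CARD('r) \<le> k"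
    and suppX: "card (row_supp X) = k"
    and BAX: "B = A ** X"
    and Bfull: "rank B = CARD('r)"
    and l: "1 \<le> l" "l \<le> CARD('r)"
    and ric: "0 \<le> lower_ric (2 * k - CARD('r) + l) A" "lower_ric (2 * k - CARD('r) + l) A < 1"
    and gp: "rows_general_position X"
    and I1: "card I \<le> min (2 * (k - CARD('r)) + l - 1) (k - 1)"
    and I2: "card (I - row_supp X) \<le> k - CARD('r) + l - 1"
    and I3: "card (I \<inter> row_supp X) \<ge> k - CARD('r)"
    and j: "j \<notin> I"
  shows "(j \<in> row_supp X \<longleftrightarrow> rank_cat A I B = rank_cat A (I \<union> {j}) B)
       \<and> (rank_cat A I B = rank_cat A (I \<union> {j}) B \<longleftrightarrow>
            inner (column j A) (proj_perp (colspace_cat A I B) (column j A)) = 0)"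
proof -
  have "card (row_supp X - I) = card (row_supp X) - card (I \<inter> row_supp X)"
    using card_Diff_subset_Int[of "row_supp X" I] by (simp add: Int_commute)
  then have outside: "card (row_supp X - I) \<le> CARD('r)" using suppX I3 by linarith
  have "card (I \<union> row_supp X) = card ((I - row_supp X) \<union> row_supp X)" by simp
  also have "\<dots> = card (I - row_supp X) + card (row_supp X)" by (rule card_Un_disjoint) auto
  finally have union: "card (I \<union> row_supp X) + 1 \<le> 2 * k - CARD('r) + l"
    using I2 suppX l dims by linarith
  have supp_iff: "j \<in> row_supp X \<longleftrightarrow> column j A \<in> colspace_cat A I B"
  proof
    assume "j \<in> row_supp X"
    then show "column j A \<in> colspace_cat A I B"
      using supp_imp_column_in_colspace[OF j _ gp outside] suppX dims BAX by simp
  next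
    assume "column j A \<in> colspace_cat A I B"
    then show "j \<in> row_supp X"
      using column_in_colspace_imp_supp[OF j _ ric(2) union] BAX by simp
  qed
  have perp_iff: "inner (column j A) (proj_perp (colspace_cat A I B) (column j A)) = 0
      \<longleftrightarrow> column j A \<in> colspace_cat A I B"
    unfolding colspace_cat_def by (rule inner_proj_perp_eq_0_iff)
  show ?thesis using supp_iff perp_iff rank_cat_insert_eq_iff by blast
qed

end
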